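(* For any constants $\alpha_1,\dots,\alpha_4$, any smooth $H=H(t,t^-,q,q^-,p,p^-)$ and any smooth $\xi,\eta,\nu$ of $(t,q,p)$, the identity $$\Omega\equiv \xi\frac{\delta\tilde H}{\delta t}+\eta\frac{\delta\tilde H}{\delta q}+\nu\frac{\delta\tilde H}{\delta p}+D(C)+(1-S_+)P$$ holds, where $$\Omega= \nu^{-}(\alpha_{1}\dot{q}+\alpha_{2}\dot{q}^{-})+p^{-}(\alpha_{1}D(\eta)+\alpha_{2}D(\eta^{-}))+\nu(\alpha_{3}\dot{q}+\alpha_{4}\dot{q}^{-})+p(\alpha_{3}D(\eta)+\alpha_{4}D(\eta^{-}))+(\alpha_{2}p^{-}+\alpha_{4}p)\dot{q}^{-}D(\xi-\xi^{-})-\xi H_t-\eta H_q-\nu H_p-\xi^{-}H_{t^-}-\eta^{-}H_{q^-}-\nu^{-}H_{p^-}-HD(\xi),$$ $$C=\eta(\alpha_{4}p^{+}+(\alpha_{2}+\alpha_{3})p+\alpha_{1}p^{-})-\xi\big(\alpha_{2}(p\dot{q}-p^{-}\dot{q}^{-})+\alpha_{4}(p^{+}\dot{q}-p\dot{q}^{-})+H\big),$$ $$P=(\alpha_{2}p^{-}+\alpha_{4}p)D(\eta^{-})+\nu^{-}(\alpha_{1}\dot{q}+\alpha_{2}\dot{q}^{-})-(\alpha_{2}p^{-}+\alpha_{4}p)\dot{q}^{-}D(\xi^{-})-\xi^{-}H_{t^-}-\eta^{-}H_{q^-}-\nu^{-}H_{p^-},$$ and $$\frac{\delta\tilde H}{\delta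 p}=\alpha_1\dot q^++(\alpha_2+\alpha_3)\dot q+\alpha_4\dot q^--\frac{\partial}{\partial p}(H+H^+),\qquad \frac{\delta\tilde H}{\delta q}=-\Big(\alpha_4\dot p^++(\alpha_2+\alpha_3)\dot p+\alpha_1\dot p^-+\frac{\partial}{\partial q}(H+H^+)\Big),$$ $$\frac{\delta\tilde H}{\delta t}=D\big[\alpha_2(p\dot q-p^-\dot q^-)+\alpha_4(p^+\dot q-p\dot q^-)\big]+D(H)-\frac{\partial}{\partial t}(H+H^+).$$
   Context: Fix a constant delay $\tau>0$; $t^\pm=t\pm\tau$, and for a function $f$ of $t$, $f^\pm=f(t\pm\tau)$. $S_+$ is the shift operator sending every variable to its value at the next point ($t^-\mapsto t$, $t\mapsto t^+$, $q^-\mapsto q$, $q\mapsto q^+$, similarly for $p$ and derivatives); $S_-$ is the backward shift; $\xi^\pm=S_\pm(\xi)$ etc. $H^+=S_+(H)=H(t^+,t,q^+,q,p^+,p)$. Subscripts on $H$ denote partial derivatives. $D$ is the total derivative acting on variables at the three points $t^-,t,t^+$: $D=\partial_t+\dot q\partial_q+\dot p\partial_p+\ddot q\partial_{\dot q}+\ddot p\partial_{\dot p}+\cdots$ plus analogous terms for the variables at $t^-$ and $t^+$. $\tilde H=p^{-}(\alpha_{1}\dot{q}+\alpha_{2}\dot{q}^{-})+p(\alpha_{3}\dot{q}+\alpha_{4}\dot{q}^{-})-H$. The quantity $\Omega$ equals $X(\tilde H)+\tilde H D(\xi)$ for the prolonged generator $X=\xi\partial_t+\eta\partial_q+\nu\partial_p+\dots$.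 *)

theory Defs
  imports "HOL-Analysis.Analysis"
begin

definition pd_t :: "(real \<Rightarrow> real \<Rightarrow> real \<Rightarrow> real \<Rightarrow> real \<Rightarrow> real \<Rightarrow> real) \<Rightarrow> real \<Rightarrow> real \<Rightarrow> real \<Rightarrow> real \<Rightarrow> real \<Rightarrow> real \<Rightarrow> real" where
  "pd_t H a b c d e f = deriv (\<lambda>x. H x b c d e f) a"
definition pd_tm :: "(real \<Rightarrow> real \<Rightarrow> real \<Rightarrow> real \<Rightarrow> real \<Rightarrow> real \<Rightarrow> real) \<Rightarrow> real \<Rightarrow> real \<Rightarrow> real \<Rightarrow> real \<Rightarrow> real \<Rightarrow> real \<Rightarrow> real" where
  "pd_tm H a b c d e f = deriv (\<lambda>x. H a x c d e f) b"
definition pd_q :: "(real \<Rightarrow> real \<Rightarrow> real \<Rightarrow> real \<Rightarrow> real \<Rightarrow> real \<Rightarrow> real) \<Rightarrow> real \<Rightarrow> real \<Rightarrow> real \<Rightarrow> real \<Rightarrow> real \<Rightarrow> real \<Rightarrow> real" where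
  "pd_q H a b c d e f = deriv (\<lambda>x. H a b x d e f) c"
definition pd_qm :: "(real \<Rightarrow> real \<Rightarrow> real \<Rightarrow> real \<Rightarrow> real \<Rightarrow> real \<Rightarrow> real) \<Rightarrow> real \<Rightarrow> real \<Rightarrow> real \<Rightarrow> real \<Rightarrow> real \<Rightarrow> real \<Rightarrow> real" where
  "pd_qm H a b c d e f = deriv (\<lambda>x. H a b c x e f) d"
definition pd_p :: "(real \<Rightarrow> real \<Rightarrow> real \<Rightarrow> real \<Rightarrow> real \<Rightarrow> real \<Rightarrow> real) \<Rightarrow> real \<Rightarrow> real \<Rightarrow> real \<Rightarrow> real \<Rightarrow> real \<Rightarrow> real \<Rightarrow> real" where
  "pd_p H a b c d e f = deriv (\<lambda>x. H a b c d x f) e"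
definition pd_pm :: "(real \<Rightarrow> real \<Rightarrow> real \<Rightarrow> real \<Rightarrow> real \<Rightarrow> real \<Rightarrow> real) \<Rightarrow> real \<Rightarrow> real \<Rightarrow> real \<Rightarrow> real \<Rightarrow> real \<Rightarrow> real \<Rightarrow> real" where
  "pd_pm H a b c d e f = deriv (\<lambda>x. H a b c d e x) f"

text \<open>Everything is evaluated along an arbitrary smooth curve (q(t), p(t)); the total
derivative D becomes the ordinary derivative in t, and S_+, S_- become
evaluation at t + tau, t - tau.\<close>

definition Hc where
  "Hc tau H q p t = H t (t - tau) (q t) (q (t - tau)) (p t) (p (t - tau))"

definition Hpd where
  "Hpd pd tau H q p t = pd H t (t - tau) (q t) (q (t - tau)) (p t) (p (t - tau))"

definition along :: "(real \<Rightarrow> real \<Rightarrow> real \<Rightarrow> real) \<Rightarrow> (real \<Rightarrow> real) \<Rightarrow> (real \<Rightarrow> real) \<Rightarrow> real \<Rightarrow> real" where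
  "along g q p t = g t (q t) (p t)"

definition Omega where
  "Omega tau a1 a2 a3 a4 H xi eta nu q p t =
    (let X = along xi q p; E = along eta q p; N = along nu q p;
         qd = deriv q; Hs = (\<lambda>pd. Hpd pd tau H q p t) in
     N (t - tau) * (a1 * qd t + a2 * qd (t - tau))
     + p (t - tau) * (a1 * deriv E t + a2 * deriv (\<lambda>s. E (s - tau)) t)
     + N t * (a3 * qd t + a4 * qd (t - tau))
     + p t * (a3 * deriv E t + a4 * deriv (\<lambda>s. E (s - tau)) t)
     + (a2 * p (t - tau) + a4 * p t) * qd (t - tau) * deriv (\<lambda>s. X s - X (s - tau)) t
     - X t * Hs pd_t - E t * Hs pd_q - N t * Hs pd_p
     - X (t - tau) * Hs pd_tm - E (t - tau) * Hs pd_qm - N (t - tau) * Hs pd_pm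
     - Hc tau H q p t * deriv X t)"

definition Cfun where
  "Cfun tau a1 a2 a3 a4 H xi eta q p t =
    (let X = along xi q p; E = along eta q p; qd = deriv q in
     E t * (a4 * p (t + tau) + (a2 + a3) * p t + a1 * p (t - tau))
     - X t * (a2 * (p t * qd t - p (t - tau) * qd (t - tau))
              + a4 * (p (t + tau) * qd t - p t * qd (t - tau)) + Hc tau H q p t))"

definition Pfun where
  "Pfun tau a1 a2 a4 H xi eta nu q p t =
    (let X = along xi q p; E = along eta q p; N = along nu q p;
         qd = deriv q; Hs = (\<lambda>pd. Hpd pd tau H q p t) in
     (a2 * p (t - tau) + a4 * p t) * deriv (\<lambda>s. E (s - tau)) t
     + N (t - tau) * (a1 * qd t + a2 * qd (t - tau))
     - (a2 * p (t - tau) + a4 * p t) * qd (t - tau) * deriv (\<lambda>s. X (s - tau)) t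
     - X (t - tau) * Hs pd_tm - E (t - tau) * Hs pd_qm - N (t - tau) * Hs pd_pm)"

definition varp where
  "varp tau a1 a2 a3 a4 H q p t =
    a1 * deriv q (t + tau) + (a2 + a3) * deriv q t + a4 * deriv q (t - tau)
    - (Hpd pd_p tau H q p t + Hpd pd_pm tau H q p (t + tau))"

definition varq where
  "varq tau a1 a2 a3 a4 H q p t =
    - (a4 * deriv p (t + tau) + (a2 + a3) * deriv p t + a1 * deriv p (t - tau)
       + Hpd pd_q tau H q p t + Hpd pd_qm tau H q p (t + tau))"

definition vart where
  "vart tau a2 a4 H q p t =
    deriv (\<lambda>s. a2 * (p s * deriv q s - p (s - tau) * deriv q (s - tau))
              + a4 * (p (s + tau) * deriv q s - p s * deriv q (s - tau))) t
    + deriv (Hc tau H q p) t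
    - (Hpd pd_t tau H q p t + Hpd pd_tm tau H q p (t + tau))"

end

theory Submission
  imports Defs
begin

text \<open>Only two facts of calculus enter: the derivative of a delayed function is the delayed
derivative, \<open>D(f\<^sup>-) = (D f)\<^sup>-\<close>, and the product rule for \<open>D(C)\<close>. After expanding \<open>D(C)\<close>
and the shifted terms of \<open>P(t + \<tau>)\<close>, both sides are the same polynomial in the values of
\<open>\<xi>, \<eta>, \<nu>, p, q\<close>, their derivatives and the partial derivatives of \<open>H\<close> at \<open>t - \<tau>, t, t + \<tau>\<close>.\<close>

lemma has_real_derivative_shift:
  fixes f :: "real \<Rightarrow> real"
  assumes "f differentiable at (x + c)"
  shows "((\<lambda>s. f (s + c)) has_real_derivative deriv f (x + c)) (at x)"
  using assms by (intro DERIV_shift[THEN iffD1]) (simp add: DERIV_deriv_iff_real_differentiable)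

lemma deriv_shift:
  fixes f :: "real \<Rightarrow> real"
  assumes "f differentiable at (x + c)"
  shows "deriv (\<lambda>s. f (s + c)) x = deriv f (x + c)"
  using has_real_derivative_shift[OF assms] by (rule DERIV_imp_deriv)

lemma deriv_delay:
  fixes f :: "real \<Rightarrow> real"
  assumes "f differentiable at (x - c)"
  shows "deriv (\<lambda>s. f (s - c)) x = deriv f (x - c)"
  using deriv_shift[of f x "- c"] assms by simp

lemma differentiable_shift:
  fixes f :: "real \<Rightarrow> real"
  assumes "f differentiable at (x + c)"
  shows "(\<lambda>s. f (s + c)) differentiable at x"
  using has_real_derivative_shift[OF assms] real_differentiable_def by blast

lemma deriv_delay_difference:
  fixes f :: "real \<Rightarrow> real"
  assumes "f differentiable at x" and "f differentiable at (x - c)"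
  shows "deriv (\<lambda>s. f s - f (s - c)) x = deriv f x - deriv f (x - c)"
proof (rule DERIV_imp_deriv, rule DERIV_diff)
  show "(f has_real_derivative deriv f x) (at x)"
    using assms(1) by (simp add: DERIV_deriv_iff_real_differentiable)
  show "((\<lambda>s. f (s - c)) has_real_derivative deriv f (x - c)) (at x)"
    using has_real_derivative_shift[of f x "- c"] assms(2) by simp
qed

lemma along_differentiable:
  fixes g :: "real \<Rightarrow> real \<Rightarrow> real \<Rightarrow> real" and q p :: "real \<Rightarrow> real"
  assumes "(\<lambda>(a, b, c). g a b c) differentiable at (x, q x, p x)"
    and "q differentiable at x" and "p differentiable at x"
  shows "along g q p differentiable at x"
proof -
  have "(\<lambda>s. (s, q s, p s)) differentiable at x"
    using assms(2,3) by (intro differentiable_Pair differentiable_ident)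
  from differentiable_chain_at[OF this assms(1)]
  show ?thesis by (simp add: along_def[abs_def] o_def)
qed

lemma Hc_differentiable:
  fixes H :: "real \<Rightarrow> real \<Rightarrow> real \<Rightarrow> real \<Rightarrow> real \<Rightarrow> real \<Rightarrow> real" and q p :: "real \<Rightarrow> real"
  assumes "(\<lambda>(a, b, c, d, e, f). H a b c d e f) differentiable
             at (x, x - tau, q x, q (x - tau), p x, p (x - tau))"
    and "q differentiable at x" and "q differentiable at (x - tau)"
    and "p differentiable at x" and "p differentiable at (x - tau)"
  shows "Hc tau H q p differentiable at x"
proof -
  have "(\<lambda>s. (s, s - tau, q s, q (s - tau), p s, p (s - tau))) differentiable at x"
    using assms(2-5) differentiable_shift[of _ x "- tau"]
    by (intro differentiable_Pair differentiable_ident differentiable_diff differentiable_const) auto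
  from differentiable_chain_at[OF this assms(1)]
  show ?thesis by (simp add: Hc_def[abs_def] o_def)
qed

definition delay_flux ::
    "real \<Rightarrow> real \<Rightarrow> real \<Rightarrow> (real \<Rightarrow> real) \<Rightarrow> (real \<Rightarrow> real) \<Rightarrow> real \<Rightarrow> real"
  where "delay_flux tau a2 a4 q p s =
    a2 * (p s * deriv q s - p (s - tau) * deriv q (s - tau))
    + a4 * (p (s + tau) * deriv q s - p s * deriv q (s - tau))"

lemma vart_eq_delay_flux:
  "vart tau a2 a4 H q p t = deriv (delay_flux tau a2 a4 q p) t + deriv (Hc tau H q p) t
     - (Hpd pd_t tau H q p t + Hpd pd_tm tau H q p (t + tau))"
  by (simp add: vart_def delay_flux_def[abs_def])

lemma delay_flux_differentiable:
  fixes q p :: "real \<Rightarrow> real"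
  assumes "p differentiable at x" and "p differentiable at (x - tau)" and "p differentiable at (x + tau)"
    and "deriv q differentiable at x" and "deriv q differentiable at (x - tau)"
  shows "delay_flux tau a2 a4 q p differentiable at x"
proof -
  have "(\<lambda>s. p (s - tau)) differentiable at x" "(\<lambda>s. p (s + tau)) differentiable at x"
    "(\<lambda>s. deriv q (s - tau)) differentiable at x"
    using assms(2,3,5) differentiable_shift[of _ x "- tau"] differentiable_shift[of p x tau] by auto
  with assms(1,4) show ?thesis
    unfolding delay_flux_def[abs_def]
    by (intro differentiable_add differentiable_diff differentiable_mult differentiable_const)
qed

lemma deriv_Cfun:
  fixes q p :: "real \<Rightarrow> real"
  assumes "along xi q p differentiable at t" and "along eta q p differentiable at t"
    and "Hc tau H q p differentiable at t" and "delay_flux tau a2 a4 q p differentiable at t"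
    and "p differentiable at t" and "p differentiable at (t - tau)" and "p differentiable at (t + tau)"
  shows "deriv (Cfun tau a1 a2 a3 a4 H xi eta q p) t =
      along eta q p t * (a4 * deriv p (t + tau) + (a2 + a3) * deriv p t + a1 * deriv p (t - tau))
    + deriv (along eta q p) t * (a4 * p (t + tau) + (a2 + a3) * p t + a1 * p (t - tau))
    - (along xi q p t * (deriv (delay_flux tau a2 a4 q p) t + deriv (Hc tau H q p) t)
       + deriv (along xi q p) t * (delay_flux tau a2 a4 q p t + Hc tau H q p t))"
proof -
  have C: "Cfun tau a1 a2 a3 a4 H xi eta q p = (\<lambda>s.
      along eta q p s * (a4 * p (s + tau) + (a2 + a3) * p s + a1 * p (s - tau))
    - along xi q p s * (delay_flux tau a2 a4 q p s + Hc tau H q p s))"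
    by (simp add: fun_eq_iff Cfun_def delay_flux_def Let_def)
  have D: "f differentiable at t \<Longrightarrow> (f has_real_derivative deriv f t) (at t)" for f
    by (simp add: DERIV_deriv_iff_real_differentiable)
  show ?thesis
    unfolding C
    using assms has_real_derivative_shift[of p t tau] has_real_derivative_shift[of p t "- tau"]
    by (intro DERIV_imp_deriv DERIV_diff DERIV_mult' DERIV_add DERIV_cmult D) auto
qed

theorem lemma2:
  fixes tau a1 a2 a3 a4 :: real
    and H :: "real \<Rightarrow> real \<Rightarrow> real \<Rightarrow> real \<Rightarrow> real \<Rightarrow> real \<Rightarrow> real"
    and xi eta nu :: "real \<Rightarrow> real \<Rightarrow> real \<Rightarrow> real"
    and q p :: "real \<Rightarrow> real"
  assumes "tau > 0"
    and "\<And>z. (\<lambda>(a, b, c, d, e, f). H a b c d e f) differentiable at z"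
    and "\<And>z. (\<lambda>(a, b, c). xi a b c) differentiable at z"
    and "\<And>z. (\<lambda>(a, b, c). eta a b c) differentiable at z"
    and "\<And>z. (\<lambda>(a, b, c). nu a b c) differentiable at z"
    and "\<And>t. q differentiable at t"
    and "\<And>t. deriv q differentiable at t"
    and "\<And>t. p differentiable at t"
  shows "Omega tau a1 a2 a3 a4 H xi eta nu q p t =
           along xi q p t * vart tau a2 a4 H q p t
         + along eta q p t * varq tau a1 a2 a3 a4 H q p t
         + along nu q p t * varp tau a1 a2 a3 a4 H q p t
         + deriv (Cfun tau a1 a2 a3 a4 H xi eta q p) t
         + (Pfun tau a1 a2 a4 H xi eta nu q p t - Pfun tau a1 a2 a4 H xi eta nu q p (t + tau))"
proof -
  have along: "along xi q p differentiable at s" "along eta q p differentiable at s" for s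
    using along_differentiable assms(3,4,6,8) by blast+
  have Hc: "Hc tau H q p differentiable at s" for s
    using Hc_differentiable assms(2,6,8) by blast
  have flux: "delay_flux tau a2 a4 q p differentiable at s" for s
    using delay_flux_differentiable assms(7,8) by blast
  note deriv_C = deriv_Cfun[OF along Hc flux assms(8) assms(8) assms(8)]
  show ?thesis
    unfolding Omega_def Pfun_def Let_def vart_eq_delay_flux varq_def varp_def deriv_C
    by (simp add: deriv_delay along deriv_delay_difference delay_flux_def algebra_simps)
qed

end
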